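(* Consider the symmetric first-price sealed-bid auction with $n=2$ bidders and uniform prior $F=\mathrm{Id}$ on $[0,1]$, and let $0<\delta\le\frac15$. Then the function $\beta^*(x)=\frac{x}{2}$ (the unique symmetric BNE) does not satisfy the symmetric MVI: there exist $\beta,\tilde\beta\in\mathcal{B}_\delta$ with $DU(\beta,\tilde\beta)[\beta-\beta^*]>0$. Moreover, the condition fails locally: for every open neighborhood $N$ of $\beta^*$ in $V$, there exist $\beta,\tilde\beta\in N\cap\mathcal{B}_\delta$ with $DU(\beta,\tilde\beta)[\beta-\beta^*]>0$.
   Context: $V:=W^{1,1}(0,1)$. For $\delta>0$, $\mathcal{B}_\delta:=\{\beta\in V:0\le\beta\le1\text{ a.e.},\ \delta\le\beta'\text{ a.e.},\ \beta(0)=0\}$. Two bidders with values i.i.d. uniform on $[0,1]$. First-price ex-ante utility of bidder 1 bidding by $\beta$ against the other bidding by $\tilde\beta$: $U(\beta,\tilde\beta)=\int_0^1(x-\beta(x))\int_0^1\chi_{\{\beta(x)>\tilde\beta(y)\}}\,\mathrm{d}y\,\mathrm{d}x$. $DU(\beta,\tilde\beta)[d]:=\lim_{\varepsilon\to0}\varepsilon^{-1}(U(\beta+\varepsilon d,\tilde\beta)-U(\beta,\tilde\beta))$ for $d\in V$. $\beta^*$ solves the symmetric MVI if $DU(\beta,\tilde\beta)[\beta-\beta^*]\le0$ for all $\beta,\tilde\beta\in\mathcal{B}_\delta$. *)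

theory Defs
  imports "HOL-Analysis.Analysis"
begin

text \<open>Elements of V = W^{1,1}(0,1) are represented by (the absolutely continuous
  representative of) a function real => real; only values on [0,1] matter.
  g is a weak derivative of beta on (0,1) iff g is integrable on [0,1] and
  beta x = beta 0 + integral of g over [0,x] for all x in [0,1].\<close>

definition weak_deriv :: "(real \<Rightarrow> real) \<Rightarrow> (real \<Rightarrow> real) \<Rightarrow> bool" where
  "weak_deriv \<beta> g \<longleftrightarrow> set_integrable lborel {0..1} g \<and>
     (\<forall>x\<in>{0..1}. \<beta> x = \<beta> 0 + (LINT t:{0..x}|lborel. g t))"

definition W11 :: "(real \<Rightarrow> real) \<Rightarrow> bool" where
  "W11 \<beta> \<longleftrightarrow> (\<exists>g. weak_deriv \<beta> g)"

text \<open>The weak derivative (unique up to null sets).\<close>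
definition wd :: "(real \<Rightarrow> real) \<Rightarrow> (real \<Rightarrow> real)" where
  "wd \<beta> = (SOME g. weak_deriv \<beta> g)"

definition w11_dist :: "(real \<Rightarrow> real) \<Rightarrow> (real \<Rightarrow> real) \<Rightarrow> real" where
  "w11_dist \<beta> \<gamma> = (LINT x:{0..1}|lborel. \<bar>\<beta> x - \<gamma> x\<bar>)
                   + (LINT x:{0..1}|lborel. \<bar>wd \<beta> x - wd \<gamma> x\<bar>)"

definition W11_open :: "(real \<Rightarrow> real) set \<Rightarrow> bool" where
  "W11_open N \<longleftrightarrow> N \<subseteq> {\<beta>. W11 \<beta>} \<and>
     (\<forall>\<beta>\<in>N. \<exists>e>0. \<forall>\<gamma>. W11 \<gamma> \<and> w11_dist \<gamma> \<beta> < e \<longrightarrow> \<gamma> \<in> N)"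

definition Bdelta :: "real \<Rightarrow> (real \<Rightarrow> real) set" where
  "Bdelta \<delta> = {\<beta>. W11 \<beta> \<and>
     (AE x in lborel. x \<in> {0..1} \<longrightarrow> 0 \<le> \<beta> x \<and> \<beta> x \<le> 1 \<and> \<delta> \<le> wd \<beta> x) \<and>
     \<beta> 0 = 0}"

text \<open>Ex-ante first-price utility of bidder 1 bidding by beta against beta~, uniform values.\<close>
definition U :: "(real \<Rightarrow> real) \<Rightarrow> (real \<Rightarrow> real) \<Rightarrow> real" where
  "U \<beta> \<beta>' = (LINT x:{0..1}|lborel. (x - \<beta> x) *
       (LINT y:{0..1}|lborel. (if \<beta> x > \<beta>' y then 1 else 0)))"

definition has_DU :: "(real \<Rightarrow> real) \<Rightarrow> (real \<Rightarrow> real) \<Rightarrow> (real \<Rightarrow> real) \<Rightarrow> real \<Rightarrow> bool" where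
  "has_DU \<beta> \<beta>' d L \<longleftrightarrow>
     ((\<lambda>\<epsilon>. (U (\<lambda>x. \<beta> x + \<epsilon> * d x) \<beta>' - U \<beta> \<beta>') / \<epsilon>) \<longlongrightarrow> L) (at 0)"

end

theory Submission
  imports Defs
begin

text \<open>The witnesses are the linear bids \<open>\<beta> x = a x\<close> and \<open>\<beta>' y = c y\<close> with
  \<open>a = 1/2 - s\<close> and \<open>c = 1/2 - 2 s\<close> for small \<open>s > 0\<close>. For \<open>0 < c \<le> A\<close> the utility has the
  closed form \<open>U (A x) (c y) = (1 - A) (1/2 - c\<^sup>2 / (6 A\<^sup>2))\<close>, so the directional derivative in
  direction \<open>\<beta> - \<beta>\<^sup>* = (a - 1/2) x\<close> is \<open>a - 1/2 = -s\<close> times the derivative of this function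
  at \<open>a\<close>, and the latter is negative. Both witnesses have slopes in \<open>[1/4, 1/2]\<close>, hence lie in
  \<open>\<B>\<^sub>\<delta>\<close> for \<open>\<delta> \<le> 1/5\<close>, and their \<open>W\<^sup>1\<^sup>,\<^sup>1\<close> distance to \<open>x/2\<close> is \<open>3/2 \<bar>slope - 1/2\<bar> \<le> 3 s\<close>.
  The one measure-theoretic ingredient is that weak derivatives are unique almost everywhere,
  which identifies the weak derivative of a linear function with its slope.\<close>

lemma AE_zero_if_set_integrals_Ioi_zero:
  fixes k :: "real \<Rightarrow> real"
  assumes k: "integrable lborel k" and zero: "\<And>t. (LINT x:{t<..}|lborel. k x) = 0"
  shows "AE x in lborel. k x = 0"
proof -
  have [measurable]: "k \<in> borel_measurable lborel"
    using k by (rule borel_measurable_integrable)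
  have norm_finite: "(\<integral>\<^sup>+x. ennreal (norm (k x)) \<partial>lborel) < \<infinity>"
    using k by (simp add: integrable_iff_bounded)
  have finite: "(\<integral>\<^sup>+x. ennreal (k x) * indicator A x \<partial>lborel) < \<infinity>"
    "(\<integral>\<^sup>+x. ennreal (- k x) * indicator A x \<partial>lborel) < \<infinity>" for A
    by (rule le_less_trans[OF _ norm_finite]; auto intro!: nn_integral_mono simp: indicator_def)+
  have ennreal_mult_indicator_eq:
      "(\<integral>\<^sup>+x. ennreal (indicator S x *\<^sub>R k x) \<partial>lborel) = (\<integral>\<^sup>+x. ennreal (k x) * indicator S x \<partial>lborel)"
      "(\<integral>\<^sup>+x. ennreal (- (indicator S x *\<^sub>R k x)) \<partial>lborel) = (\<integral>\<^sup>+x. ennreal (- k x) * indicator S x \<partial>lborel)"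
    for S by (auto intro!: nn_integral_cong split: split_indicator)
  have Ioi_eq: "(\<integral>\<^sup>+x. ennreal (k x) * indicator {t<..} x \<partial>lborel)
      = (\<integral>\<^sup>+x. ennreal (- k x) * indicator {t<..} x \<partial>lborel)" for t
  proof -
    let ?P = "\<integral>\<^sup>+x. ennreal (k x) * indicator {t<..} x \<partial>lborel"
    let ?Q = "\<integral>\<^sup>+x. ennreal (- k x) * indicator {t<..} x \<partial>lborel"
    have "integrable lborel (\<lambda>x. indicator {t<..} x *\<^sub>R k x)"
      using integrable_mult_indicator[OF _ k] by simp
    from real_lebesgue_integral_def[OF this] have "enn2real ?P = enn2real ?Q"
      using zero[of t] unfolding set_lebesgue_integral_def ennreal_mult_indicator_eq by simp
    then have "ennreal (enn2real ?P) = ennreal (enn2real ?Q)" by (rule arg_cong)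
    then show ?thesis
      using finite[of "{t<..}"] by (simp only: ennreal_enn2real infinity_ennreal_def)
  qed
  have "density lborel (\<lambda>x. ennreal (k x)) = density lborel (\<lambda>x. ennreal (- k x))"
    by (rule measure_eqI_lessThan)
       (use finite Ioi_eq in \<open>simp_all add: emeasure_density\<close>)
  then have ennreal_eq: "AE x in lborel. ennreal (k x) = ennreal (- k x)"
    using finite(1)[of UNIV] k by (subst (asm) finite_density_unique) auto
  have zero_if_ennreal_eq: "r = 0" if "ennreal r = ennreal (- r)" for r :: real
    using that by (cases "0 \<le> r") (auto simp: ennreal_neg)
  show ?thesis
    using ennreal_eq by eventually_elim (rule zero_if_ennreal_eq)
qed

lemma weak_deriv_unique:
  assumes g: "weak_deriv \<beta> g" and h: "weak_deriv \<beta> h"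
  shows "AE x in lborel. x \<in> {0..1} \<longrightarrow> g x = h x"
proof -
  have g_int: "set_integrable lborel {0..1} g" and h_int: "set_integrable lborel {0..1} h"
    using g h unfolding weak_deriv_def by blast+
  have g_h_initial: "(LINT t:{0..x}|lborel. g t) = (LINT t:{0..x}|lborel. h t)" if "x \<in> {0..1}" for x
    using g h that unfolding weak_deriv_def by (metis add_left_cancel)
  define d where "d = (\<lambda>x. g x - h x)"
  have d_int: "set_integrable lborel {0..1} d"
    unfolding d_def using g_int h_int by (rule set_integral_diff(1))
  have d_int_subset: "set_integrable lborel ({0..1} \<inter> S) d" if "S \<in> sets lborel" for S
    by (rule set_integrable_subset[OF d_int]) (use that in auto)
  have d_atMost: "(LINT x:{0..1} \<inter> {..t}|lborel. d x) = 0" for t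
  proof (cases "t < 0")
    case True
    then have "{0..1} \<inter> {..t} = {}" by auto
    then show ?thesis by (simp add: set_lebesgue_integral_def)
  next
    case False
    then have eq: "{0..1} \<inter> {..t} = {0..min 1 t}" by auto
    have "min 1 t \<in> {0..1}" using False by auto
    moreover have "set_integrable lborel {0..min 1 t} g" "set_integrable lborel {0..min 1 t} h"
      by (auto intro: set_integrable_subset g_int h_int)
    ultimately show ?thesis
      unfolding eq d_def by (simp add: g_h_initial)
  qed
  have d_greaterThan: "(LINT x:{0..1} \<inter> {t<..}|lborel. d x) = 0" for t
  proof -
    have "(LINT x:({0..1} \<inter> {..t}) \<union> ({0..1} \<inter> {t<..})|lborel. d x)
        = (LINT x:{0..1} \<inter> {..t}|lborel. d x) + (LINT x:{0..1} \<inter> {t<..}|lborel. d x)"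
      by (intro set_integral_Un d_int_subset) auto
    moreover have "({0..1} \<inter> {..t}) \<union> ({0..1} \<inter> {t<..}) = {0..1::real}" by auto
    moreover have "{0..1} \<inter> {..1} = {0..1::real}" by auto
    ultimately show ?thesis using d_atMost[of t] d_atMost[of 1] by simp
  qed
  have "AE x in lborel. indicator {0..1} x * d x = 0"
  proof (rule AE_zero_if_set_integrals_Ioi_zero)
    show "integrable lborel (\<lambda>x. indicator {0..1} x * d x)"
      using d_int unfolding set_integrable_def by simp
    show "(LINT x:{t<..}|lborel. indicator {0..1} x * d x) = 0" for t
      using d_greaterThan[of t] unfolding set_lebesgue_integral_def
      by (simp add: indicator_inter_arith mult.assoc mult.left_commute)
  qed
  then show ?thesis
    by (rule eventually_mono) (simp add: d_def indicator_def)
qed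

lemma weak_deriv_wd: "W11 \<beta> \<Longrightarrow> weak_deriv \<beta> (wd \<beta>)"
  unfolding W11_def wd_def by (rule someI_ex[of "weak_deriv \<beta>"])

lemma set_integrable_wd: "W11 \<beta> \<Longrightarrow> set_integrable lborel {0..1} (wd \<beta>)"
  using weak_deriv_wd unfolding weak_deriv_def by blast

lemma weak_deriv_linear: "weak_deriv (\<lambda>x. a * x) (\<lambda>_. a)"
  unfolding weak_deriv_def
proof
  show "set_integrable lborel {0..1::real} (\<lambda>_. a)"
    by (rule borel_integrable_atLeastAtMost'[OF continuous_on_const])
  show "\<forall>x\<in>{0..1}. a * x = a * 0 + (LINT t:{0..x}|lborel. a)"
    by (simp add: set_integral_const)
qed

lemma W11_linear: "W11 (\<lambda>x. a * x)"
  unfolding W11_def using weak_deriv_linear by blast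

lemma wd_linear: "AE x\<in>{0..1} in lborel. wd (\<lambda>x. a * x) x = a"
  by (rule weak_deriv_unique[OF weak_deriv_wd[OF W11_linear] weak_deriv_linear])

lemma Bdelta_linear:
  assumes "0 \<le> a" "\<delta> \<le> a" "a \<le> 1"
  shows "(\<lambda>x. a * x) \<in> Bdelta \<delta>"
  unfolding Bdelta_def
proof (intro CollectI conjI W11_linear)
  show "AE x\<in>{0..1} in lborel. 0 \<le> a * x \<and> a * x \<le> 1 \<and> \<delta> \<le> wd (\<lambda>x. a * x) x"
    using wd_linear[of a] by eventually_elim (use assms in \<open>auto simp: mult_le_one\<close>)
qed simp

lemma w11_dist_linear: "w11_dist (\<lambda>x. a * x) (\<lambda>x. b * x) = 3/2 * \<bar>a - b\<bar>"
proof -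
  have "(LINT x:{0..1}|lborel. \<bar>a * x - b * x\<bar>) = (LINT x:{0..1}|lborel. \<bar>a - b\<bar> * x)"
    by (rule set_lebesgue_integral_cong) (auto simp: abs_mult left_diff_distrib[symmetric])
  also have "\<dots> = \<bar>a - b\<bar> * 1\<^sup>2 / 2 - \<bar>a - b\<bar> * 0\<^sup>2 / 2"
    unfolding set_lebesgue_integral_def
    by (rule integral_FTC_atLeastAtMost)
       (auto simp: has_real_derivative_iff_has_vector_derivative[symmetric]
         intro!: derivative_eq_intros continuous_intros)
  finally have L1_dist: "(LINT x:{0..1}|lborel. \<bar>a * x - b * x\<bar>) = \<bar>a - b\<bar> / 2" by simp
  have "set_integrable lborel {0..1} (\<lambda>x. \<bar>wd (\<lambda>x. a * x) x - wd (\<lambda>x. b * x) x\<bar>)"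
    by (intro set_integrable_abs set_integral_diff(1) set_integrable_wd W11_linear)
  then have wd_diff_measurable:
      "(\<lambda>x. indicator {0..1} x *\<^sub>R \<bar>wd (\<lambda>x. a * x) x - wd (\<lambda>x. b * x) x\<bar>) \<in> borel_measurable lborel"
    unfolding set_integrable_def by (rule borel_measurable_integrable)
  have "(LINT x:{0..1}|lborel. \<bar>wd (\<lambda>x. a * x) x - wd (\<lambda>x. b * x) x\<bar>) = (LINT x:{0..1::real}|lborel. \<bar>a - b\<bar>)"
    unfolding set_lebesgue_integral_def
    by (rule Bochner_Integration.integral_cong_AE[OF wd_diff_measurable])
       (use wd_linear[of a] wd_linear[of b] in \<open>auto elim!: AE_mp simp: indicator_def\<close>)
  also have "\<dots> = \<bar>a - b\<bar>"
    by (simp add: set_integral_const)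
  finally show ?thesis
    unfolding w11_dist_def L1_dist by simp
qed

lemma w11_dist_linear_half: "w11_dist (\<lambda>x. a * x) (\<lambda>x. x / 2) = 3/2 * \<bar>a - 1/2\<bar>"
proof -
  have "(\<lambda>x::real. x / 2) = (\<lambda>x. (1/2) * x)" by auto
  then show ?thesis by (simp only: w11_dist_linear)
qed

lemma winning_probability_linear:
  fixes b c :: real
  assumes "0 < c" "0 \<le> b"
  shows "(LINT y:{0..1}|lborel. (if b > c * y then 1 else 0)) = min 1 (b / c)"
proof -
  have "(LINT y:{0..1}|lborel. (if b > c * y then 1 else 0))
      = integral\<^sup>L lborel (indicator ({0..1} \<inter> {..<b / c}) :: real \<Rightarrow> real)"
    unfolding set_lebesgue_integral_def
    by (intro Bochner_Integration.integral_cong) (auto simp: assms indicator_def field_simps)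
  also have "\<dots> = min 1 (b / c)"
  proof (cases "b / c \<le> 1")
    case True
    then have "{0..1} \<inter> {..<b / c} = {0..<b / c}" by auto
    then show ?thesis using True assms by simp
  next
    case False
    then have "{0..1} \<inter> {..<b / c} = {0..1::real}" by auto
    then show ?thesis using False by simp
  qed
  finally show ?thesis .
qed

definition linear_utility :: "real \<Rightarrow> real \<Rightarrow> real" where
  "linear_utility c a = (1 - a) * (1/2 - c\<^sup>2 / (6 * a\<^sup>2))"

definition linear_utility_deriv :: "real \<Rightarrow> real \<Rightarrow> real" where
  "linear_utility_deriv c a = c\<^sup>2 / (6 * a\<^sup>2) - 1/2 + (1 - a) * c\<^sup>2 / (3 * a ^ 3)"

lemma has_integral_antiderivative:
  fixes f g G :: "real \<Rightarrow> real"
  assumes "a \<le> b"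
    and G: "\<And>x. x \<in> {a..b} \<Longrightarrow> (G has_real_derivative g x) (at x)"
    and fg: "\<And>x. x \<in> {a..b} \<Longrightarrow> f x = g x"
  shows "(f has_integral G b - G a) {a..b}"
proof -
  have "(g has_integral G b - G a) {a..b}"
    using assms(1) by (rule fundamental_theorem_of_calculus)
      (use G in \<open>auto simp: has_real_derivative_iff_has_vector_derivative[symmetric] intro: DERIV_subset\<close>)
  then show ?thesis
    using fg by (subst has_integral_cong) auto
qed

lemma U_linear:
  fixes a c :: real
  assumes c: "0 < c" "c \<le> a"
  shows "U (\<lambda>x. a * x) (\<lambda>y. c * y) = linear_utility c a"
proof -
  have a: "0 < a" using c by simp
  define f where "f x = (x - a * x) * min 1 (a * x / c)" for x
  define m where "m = c / a"
  have m: "0 \<le> m" "m \<le> 1" using c a by (auto simp: m_def)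
  have "U (\<lambda>x. a * x) (\<lambda>y. c * y) = (LINT x:{0..1}|lborel. f x)"
    unfolding U_def
  proof (intro set_lebesgue_integral_cong allI impI)
    fix x :: real assume "x \<in> {0..1}"
    then have "0 \<le> a * x" using a by simp
    then show "(x - a * x) * (LINT y:{0..1}|lborel. (if a * x > c * y then 1 else 0)) = f x"
      by (simp add: f_def winning_probability_linear c)
  qed simp
  also have "\<dots> = integral {0..1} f"
    by (rule set_borel_integral_eq_integral(2)[OF borel_integrable_atLeastAtMost'])
       (use c in \<open>auto simp: f_def intro!: continuous_intros\<close>)
  also have "\<dots> = linear_utility c a"
  proof (rule integral_unique)
    have "f x = (1 - a) * a / c * x\<^sup>2" if "x \<in> {0..m}" for x
    proof -
      have "a * x / c \<le> 1" using that a c by (simp add: m_def field_simps)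
      then show ?thesis by (simp add: f_def power2_eq_square algebra_simps)
    qed
    then have "(f has_integral (1 - a) * a / c * m ^ 3 / 3 - (1 - a) * a / c * 0 ^ 3 / 3) {0..m}"
      by (intro has_integral_antiderivative[where G = "\<lambda>x. (1 - a) * a / c * x ^ 3 / 3"] m)
         (use c in \<open>auto intro!: derivative_eq_intros simp: power2_eq_square\<close>)
    moreover have "f x = (1 - a) * x" if "x \<in> {m..1}" for x
    proof -
      have "1 \<le> a * x / c" using that a c by (simp add: m_def field_simps)
      then show ?thesis by (simp add: f_def algebra_simps)
    qed
    then have "(f has_integral (1 - a) * 1\<^sup>2 / 2 - (1 - a) * m\<^sup>2 / 2) {m..1}"
      by (intro has_integral_antiderivative[where G = "\<lambda>x. (1 - a) * x\<^sup>2 / 2"] m)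
         (auto intro!: derivative_eq_intros)
    ultimately have "(f has_integral ((1 - a) * a / c * m ^ 3 / 3 - (1 - a) * a / c * 0 ^ 3 / 3)
        + ((1 - a) * 1\<^sup>2 / 2 - (1 - a) * m\<^sup>2 / 2)) {0..1}"
      by (rule has_integral_combine[OF m])
    moreover have "((1 - a) * a / c * m ^ 3 / 3 - (1 - a) * a / c * 0 ^ 3 / 3)
        + ((1 - a) * 1\<^sup>2 / 2 - (1 - a) * m\<^sup>2 / 2) = linear_utility c a"
      using a c by (simp add: linear_utility_def m_def field_simps power2_eq_square power3_eq_cube)
    ultimately show "(f has_integral linear_utility c a) {0..1}" by (simp only:)
  qed
  finally show ?thesis .
qed

lemma linear_utility_has_real_derivative:
  assumes "0 < a"
  shows "(linear_utility c has_real_derivative linear_utility_deriv c a) (at a)"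
proof -
  have "((\<lambda>a. (1 - a) * (1/2 - c\<^sup>2 / (6 * a\<^sup>2))) has_real_derivative
          - (1/2 - c\<^sup>2 / (6 * a\<^sup>2)) + (1 - a) * (c\<^sup>2 * (12 * a) / (6 * a\<^sup>2)\<^sup>2)) (at a)"
    using assms by (auto intro!: derivative_eq_intros)
  moreover have "- (1/2 - c\<^sup>2 / (6 * a\<^sup>2)) + (1 - a) * (c\<^sup>2 * (12 * a) / (6 * a\<^sup>2)\<^sup>2)
      = c\<^sup>2 / (6 * a\<^sup>2) - 1/2 + (1 - a) * c\<^sup>2 / (3 * a ^ 3)"
    using assms by (simp add: field_simps power2_eq_square power3_eq_cube)
  ultimately show ?thesis unfolding linear_utility_def linear_utility_deriv_def by simp
qed

lemma linear_utility_deriv_neg: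
  fixes s :: real
  assumes "0 < s" "s \<le> 1/8"
  shows "linear_utility_deriv (1/2 - 2 * s) (1/2 - s) < 0"
proof -
  define a where "a = 1/2 - s"
  define c where "c = 1/2 - 2 * s"
  have a: "0 < a" using assms by (simp add: a_def)
  have "linear_utility_deriv c a * (6 * a ^ 3) = c\<^sup>2 * (2 - a) - 3 * a ^ 3"
    using a by (simp add: linear_utility_deriv_def field_simps power2_eq_square power3_eq_cube)
  also have "\<dots> = - s * (1/2 + s/2 - 7 * s\<^sup>2)"
    by (simp add: a_def c_def algebra_simps power2_eq_square power3_eq_cube)
  also have "\<dots> < 0"
  proof -
    have "s\<^sup>2 \<le> (1/8)\<^sup>2" using assms by (intro power_mono) auto
    then show ?thesis using assms by (intro mult_neg_pos) (auto simp: power2_eq_square)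
  qed
  finally show ?thesis using a by (simp add: a_def c_def mult_less_0_iff)
qed

lemma has_DU_linear:
  assumes c: "0 < c" "c < a" and D: "(linear_utility c has_real_derivative D) (at a)"
  shows "has_DU (\<lambda>x. a * x) (\<lambda>y. c * y) (\<lambda>x. k * x) (k * D)"
proof -
  let ?u = "\<lambda>\<epsilon>. linear_utility c (a + \<epsilon> * k)"
  have "((\<lambda>\<epsilon>. a + \<epsilon> * k) has_real_derivative k) (at 0)"
    by (auto intro!: derivative_eq_intros)
  then have "(?u has_real_derivative D * k) (at 0)"
    using DERIV_chain2[of "linear_utility c" D "\<lambda>\<epsilon>. a + \<epsilon> * k" 0 k] D by simp
  then have quotient: "((\<lambda>\<epsilon>. (?u \<epsilon> - ?u 0) / \<epsilon>) \<longlongrightarrow> k * D) (at 0)"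
    by (simp add: has_field_derivative_iff mult.commute)
  have "((\<lambda>\<epsilon>. a + \<epsilon> * k) \<longlongrightarrow> a) (at 0)"
    by (auto intro!: tendsto_eq_intros)
  then have "\<forall>\<^sub>F \<epsilon> in at 0. c < a + \<epsilon> * k"
    using c(2) by (rule order_tendstoD)
  then have "\<forall>\<^sub>F \<epsilon> in at 0. (?u \<epsilon> - ?u 0) / \<epsilon>
      = (U (\<lambda>x. a * x + \<epsilon> * (k * x)) (\<lambda>y. c * y) - U (\<lambda>x. a * x) (\<lambda>y. c * y)) / \<epsilon>"
  proof eventually_elim
    case (elim \<epsilon>)
    have "(\<lambda>x. a * x + \<epsilon> * (k * x)) = (\<lambda>x. (a + \<epsilon> * k) * x)"
      by (auto simp: algebra_simps)
    then show ?case
      using U_linear[OF c(1) less_imp_le[OF elim]] U_linear[OF c(1) less_imp_le[OF c(2)]] by simp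
  qed
  with quotient show ?thesis
    unfolding has_DU_def by (rule tendsto_cong[THEN iffD1, rotated])
qed

lemma linear_bids_violate_MVI:
  fixes s :: real
  assumes "0 < s" "s \<le> 1/8"
  shows "\<exists>L>0. has_DU (\<lambda>x. (1/2 - s) * x) (\<lambda>y. (1/2 - 2 * s) * y) (\<lambda>x. (1/2 - s) * x - x / 2) L"
proof -
  define D where "D = linear_utility_deriv (1/2 - 2 * s) (1/2 - s)"
  have direction: "(\<lambda>x. (- s) * x) = (\<lambda>x. (1/2 - s) * x - x / 2)"
    by (auto simp: algebra_simps)
  have "has_DU (\<lambda>x. (1/2 - s) * x) (\<lambda>y. (1/2 - 2 * s) * y) (\<lambda>x. (- s) * x) (- s * D)"
    unfolding D_def using assms
    by (intro has_DU_linear linear_utility_has_real_derivative) auto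
  moreover have "0 < - s * D"
    using linear_utility_deriv_neg[OF assms] assms by (simp add: D_def mult_pos_neg)
  ultimately show ?thesis
    unfolding direction by blast
qed

theorem lemma4:
  fixes \<delta> :: real
  assumes "0 < \<delta>" and "\<delta> \<le> 1/5"
  shows "(\<exists>\<beta>\<in>Bdelta \<delta>. \<exists>\<beta>'\<in>Bdelta \<delta>. \<exists>L>0. has_DU \<beta> \<beta>' (\<lambda>x. \<beta> x - x / 2) L)
       \<and> (\<forall>N. W11_open N \<and> (\<lambda>x. x / 2) \<in> N \<longrightarrow>
            (\<exists>\<beta>\<in>N \<inter> Bdelta \<delta>. \<exists>\<beta>'\<in>N \<inter> Bdelta \<delta>. \<exists>L>0. has_DU \<beta> \<beta>' (\<lambda>x. \<beta> x - x / 2) L))"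
proof -
  have near_half: "\<exists>\<beta>\<in>N \<inter> Bdelta \<delta>. \<exists>\<beta>'\<in>N \<inter> Bdelta \<delta>. \<exists>L>0. has_DU \<beta> \<beta>' (\<lambda>x. \<beta> x - x / 2) L"
    if N: "W11_open N" "(\<lambda>x. x / 2) \<in> N" for N
  proof -
    obtain e where "e > 0" and ball: "\<And>\<gamma>. W11 \<gamma> \<Longrightarrow> w11_dist \<gamma> (\<lambda>x. x / 2) < e \<Longrightarrow> \<gamma> \<in> N"
      using N unfolding W11_open_def by blast
    define s where "s = min (1/8) (e/4)"
    have s: "0 < s" "s \<le> 1/8" "s \<le> e/4" using \<open>e > 0\<close> by (auto simp: s_def)
    have "(\<lambda>x. (1/2 - s) * x) \<in> N" "(\<lambda>y. (1/2 - 2 * s) * y) \<in> N"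
      using s by (auto intro!: ball W11_linear simp: w11_dist_linear_half)
    moreover have "(\<lambda>x. (1/2 - s) * x) \<in> Bdelta \<delta>" "(\<lambda>y. (1/2 - 2 * s) * y) \<in> Bdelta \<delta>"
      by (rule Bdelta_linear; use s assms in linarith)+
    ultimately show ?thesis
      using linear_bids_violate_MVI[OF s(1,2)] by blast
  qed
  have "W11_open (Collect W11)" "(\<lambda>x. x / 2) \<in> Collect W11"
    using W11_linear[of "1/2"] unfolding W11_open_def by (auto intro: exI[of _ 1])
  with near_half show ?thesis by blast
qed

end
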